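(* For every extended directed co-graph $G=(V,E)$ which is given by a binary ex-di-co-tree, the directed path-width $\mathrm{dpw}(G)$ and the directed tree-width $\mathrm{dtw}(G)$ can be computed in time $O(|V|)$.
   Context: Digraphs are finite, without loops or multiple arcs. For vertex-disjoint digraphs $G_1,\ldots,G_k$: the series composition $\otimes$ is their disjoint union plus all arcs in both directions between vertices of different $G_i$; a directed union $\ominus$ is any digraph obtained from their disjoint union by adding some (possibly none or all) arcs from vertices of $G_i$ to vertices of $G_j$ with $i<j$. Extended directed co-graphs: single-vertex digraphs, and closure under directed union and series composition. An ex-di-co-tree for $G$ is a rooted tree whose leaves correspond to the vertices of $G$ and whose inner nodes correspond to directed union or series composition operations applied to the digraphs defined by the child subtrees (in order), so that the root yields $G$; it is binary if every inner node has exactly two children. Directed path-width: a directed path-decomposition of $G=(V,E)$ is a sequence $(X_1,\ldots,X_r)$ of subsets of $V$ with $\bigcup X_i=V$, for each arc $(u,v)$ some $i\le j$ with $u\in X_i,v\in X_j$, and for each vertex the bags containing it having consecutive indices; width $\max|X_i|-1$; $\mathrm{dpw}(G)$ is the minimum width. Directed tree-width: for $Z\subseteq V$, $S\subseteq V$ is $Z$-normal if no directed walk in $G-Z$ with first and last vertex in $S$ uses a vertex of $G-(Z\cup S)$. A directed tree-decomposition is $(T,\mathcal{X},\mathcal{W})$ with $T=(V_T,E_T)$ an out-tree (rooted, arcs directed away from root; $u\le v$ means a directed path of $\ge0$ arcs from $u$ to $v$), $\mathcal{X}=\{X_e:e\in E_T\}$, $\mathcal{W}=\{W_r:r\in V_T\}$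 subsets of $V$, such that $\mathcal{W}$ partitions $V$ into nonempty sets and for each $(u,v)\in E_T$ the set $\bigcup\{W_r: v\le r\}$ is $X_{(u,v)}$-normal; width $\max_r|W_r\cup\bigcup_{e\sim r}X_e|-1$ ($e\sim r$: $r$ is an end of $e$); $\mathrm{dtw}(G)$ is the minimum width. *)

theory Defs
  imports Main
begin

definition digraph :: "'a set \<Rightarrow> ('a \<times> 'a) set \<Rightarrow> bool" where
  "digraph V E \<longleftrightarrow> finite V \<and> E \<subseteq> V \<times> V \<and> (\<forall>v. (v, v) \<notin> E)"

datatype 'a exdico_tree =
    Leaf 'a
  | DUnion "'a exdico_tree" "'a exdico_tree"
  | Series "'a exdico_tree" "'a exdico_tree"

inductive is_exdico_tree :: "'a exdico_tree \<Rightarrow> 'a set \<Rightarrow> ('a \<times> 'a) set \<Rightarrow> bool" where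
  leaf: "is_exdico_tree (Leaf v) {v} {}"
| dunion: "\<lbrakk> is_exdico_tree t1 V1 E1; is_exdico_tree t2 V2 E2; V1 \<inter> V2 = {};
            E1 \<union> E2 \<subseteq> E; E \<subseteq> E1 \<union> E2 \<union> (V1 \<times> V2) \<rbrakk>
           \<Longrightarrow> is_exdico_tree (DUnion t1 t2) (V1 \<union> V2) E"
| series: "\<lbrakk> is_exdico_tree t1 V1 E1; is_exdico_tree t2 V2 E2; V1 \<inter> V2 = {} \<rbrakk>
           \<Longrightarrow> is_exdico_tree (Series t1 t2) (V1 \<union> V2) (E1 \<union> E2 \<union> (V1 \<times> V2) \<union> (V2 \<times> V1))"

definition is_dpd :: "'a set \<Rightarrow> ('a \<times> 'a) set \<Rightarrow> 'a set list \<Rightarrow> bool" where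
  "is_dpd V E Xs \<longleftrightarrow>
     Xs \<noteq> [] \<and> (\<forall>X\<in>set Xs. X \<subseteq> V) \<and> \<Union>(set Xs) = V \<and>
     (\<forall>(u, v)\<in>E. \<exists>i j. i \<le> j \<and> j < length Xs \<and> u \<in> Xs ! i \<and> v \<in> Xs ! j) \<and>
     (\<forall>v i j k. i \<le> j \<and> j \<le> k \<and> k < length Xs \<and> v \<in> Xs ! i \<and> v \<in> Xs ! k \<longrightarrow> v \<in> Xs ! j)"

definition dpd_width :: "'a set list \<Rightarrow> nat" where
  "dpd_width Xs = Max (card ` set Xs) - 1"

definition dpw :: "'a set \<Rightarrow> ('a \<times> 'a) set \<Rightarrow> nat" where
  "dpw V E = (LEAST k. \<exists>Xs. is_dpd V E Xs \<and> dpd_width Xs = k)"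

definition walk_avoiding :: "'a set \<Rightarrow> ('a \<times> 'a) set \<Rightarrow> 'a set \<Rightarrow> 'a list \<Rightarrow> bool" where
  "walk_avoiding V E Z p \<longleftrightarrow> p \<noteq> [] \<and> set p \<subseteq> V - Z \<and>
     (\<forall>i. Suc i < length p \<longrightarrow> (p ! i, p ! Suc i) \<in> E)"

definition z_normal :: "'a set \<Rightarrow> ('a \<times> 'a) set \<Rightarrow> 'a set \<Rightarrow> 'a set \<Rightarrow> bool" where
  "z_normal V E Z S \<longleftrightarrow>
     \<not> (\<exists>p. walk_avoiding V E Z p \<and> hd p \<in> S \<and> last p \<in> S \<and> (\<exists>w\<in>set p. w \<notin> Z \<union> S))"

definition out_tree :: "nat set \<Rightarrow> (nat \<times> nat) set \<Rightarrow> nat \<Rightarrow> bool" where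
  "out_tree VT ET r0 \<longleftrightarrow> finite VT \<and> r0 \<in> VT \<and> ET \<subseteq> VT \<times> VT \<and>
     (\<forall>u. (u, r0) \<notin> ET) \<and>
     (\<forall>v\<in>VT - {r0}. \<exists>!u. (u, v) \<in> ET) \<and>
     (\<forall>v\<in>VT. (r0, v) \<in> ET\<^sup>*)"

definition is_dtd :: "'a set \<Rightarrow> ('a \<times> 'a) set \<Rightarrow> nat set \<Rightarrow> (nat \<times> nat) set \<Rightarrow> nat
     \<Rightarrow> (nat \<times> nat \<Rightarrow> 'a set) \<Rightarrow> (nat \<Rightarrow> 'a set) \<Rightarrow> bool" where
  "is_dtd V E VT ET r0 X W \<longleftrightarrow>
     out_tree VT ET r0 \<and>
     (\<forall>e\<in>ET. X e \<subseteq> V) \<and>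
     (\<forall>r\<in>VT. W r \<noteq> {} \<and> W r \<subseteq> V) \<and>
     (\<forall>r\<in>VT. \<forall>s\<in>VT. r \<noteq> s \<longrightarrow> W r \<inter> W s = {}) \<and>
     (\<Union>r\<in>VT. W r) = V \<and>
     (\<forall>(u, v)\<in>ET. z_normal V E (X (u, v)) (\<Union>r\<in>{r\<in>VT. (v, r) \<in> ET\<^sup>*}. W r))"

definition dtd_width :: "nat set \<Rightarrow> (nat \<times> nat) set \<Rightarrow> (nat \<times> nat \<Rightarrow> 'a set) \<Rightarrow> (nat \<Rightarrow> 'a set) \<Rightarrow> nat" where
  "dtd_width VT ET X W =
     Max ((\<lambda>r. card (W r \<union> (\<Union>e\<in>{e\<in>ET. fst e = r \<or> snd e = r}. X e))) ` VT) - 1"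

definition dtw :: "'a set \<Rightarrow> ('a \<times> 'a) set \<Rightarrow> nat" where
  "dtw V E = (LEAST k. \<exists>VT ET r0 X W. is_dtd V E VT ET r0 X W \<and> dtd_width VT ET X W = k)"

text \<open>dico_eval t = (p, n) with p the computed width value and n the number of
 vertices; each inner node performs a constant number of arithmetic operations.\<close>

fun dico_eval :: "'a exdico_tree \<Rightarrow> nat \<times> nat" where
  "dico_eval (Leaf v) = (0, 1)"
| "dico_eval (DUnion t1 t2) =
     (let (p1, n1) = dico_eval t1; (p2, n2) = dico_eval t2 in (max p1 p2, n1 + n2))"
| "dico_eval (Series t1 t2) =
     (let (p1, n1) = dico_eval t1; (p2, n2) = dico_eval t2 in (min (p1 + n2) (p2 + n1), n1 + n2))"

text \<open>Cost model: one unit per tree node visited (constant work per node).\<close>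

fun dico_cost :: "'a exdico_tree \<Rightarrow> nat" where
  "dico_cost (Leaf v) = 1"
| "dico_cost (DUnion t1 t2) = dico_cost t1 + dico_cost t2 + 1"
| "dico_cost (Series t1 t2) = dico_cost t1 + dico_cost t2 + 1"

end

theory Submission
  imports Defs
begin

text \<open>Let f be the value computed by dico_eval. We show f \<le> dtw \<le> dpw \<le> f.
 A directed path-decomposition with bags of size at most f + 1 is built along the tree: a
 directed union concatenates the decompositions of its children, and a series composition adds
 all vertices of one child to every bag of the other child's decomposition, choosing the cheaper
 side. For an arbitrary digraph, ordering the vertices by the first bag containing them turns a
 directed path-decomposition into a path-shaped directed tree-decomposition whose bags lie in the
 original ones, so dtw \<le> dpw. Conversely a haven of order f + 1 is built along the tree, and a
 haven of order k forces a bag of size at least k in every directed tree-decomposition: the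
 robber it describes can always escape from a node into one of its subtrees. The tree has
 2 |V| - 1 nodes, which bounds the cost.\<close>

section \<open>Walks avoiding a vertex set\<close>

inductive reach_avoiding :: "'a set \<Rightarrow> ('a \<times> 'a) set \<Rightarrow> 'a set \<Rightarrow> 'a \<Rightarrow> 'a \<Rightarrow> bool"
  for V E Z where
  refl: "x \<in> V \<Longrightarrow> x \<notin> Z \<Longrightarrow> reach_avoiding V E Z x x"
| step: "(x, y) \<in> E \<Longrightarrow> x \<in> V \<Longrightarrow> x \<notin> Z \<Longrightarrow> reach_avoiding V E Z y z \<Longrightarrow> reach_avoiding V E Z x z"

lemma reach_avoiding_endpoints:
  "reach_avoiding V E Z x y \<Longrightarrow> x \<in> V - Z \<and> y \<in> V - Z"
  by (induction rule: reach_avoiding.induct) auto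

lemma reach_avoiding_arc:
  "(x, y) \<in> E \<Longrightarrow> x \<in> V - Z \<Longrightarrow> y \<in> V - Z \<Longrightarrow> reach_avoiding V E Z x y"
  by (auto intro: reach_avoiding.intros)

lemma walk_avoiding_Cons:
  assumes "walk_avoiding V E Z p" "hd p = y" "x \<in> V" "x \<notin> Z" "(x, y) \<in> E"
  shows "walk_avoiding V E Z (x # p)"
  using assms unfolding walk_avoiding_def
  by (auto simp: nth_Cons hd_conv_nth split: nat.split)

lemma reach_avoiding_walk:
  "reach_avoiding V E Z x y \<Longrightarrow> \<exists>p. walk_avoiding V E Z p \<and> hd p = x \<and> last p = y"
proof (induction rule: reach_avoiding.induct)
  case (refl x)
  then show ?case by (intro exI[of _ "[x]"]) (auto simp: walk_avoiding_def)
next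
  case (step x y z)
  then obtain p where p: "walk_avoiding V E Z p" "hd p = y" "last p = z" by blast
  have "walk_avoiding V E Z (x # p)" by (rule walk_avoiding_Cons[OF p(1,2) step(2,3,1)])
  then show ?case using p by (intro exI[of _ "x # p"]) (auto simp: walk_avoiding_def)
qed

lemma reach_avoiding_walk_through:
  "reach_avoiding V E Z x w \<Longrightarrow> reach_avoiding V E Z w y \<Longrightarrow>
    \<exists>p. walk_avoiding V E Z p \<and> hd p = x \<and> last p = y \<and> w \<in> set p"
proof (induction rule: reach_avoiding.induct)
  case (refl x)
  then obtain p where "walk_avoiding V E Z p" "hd p = x" "last p = y"
    using reach_avoiding_walk by metis
  then show ?case by (metis hd_in_set walk_avoiding_def)
next
  case (step x x' w)
  then obtain p where p: "walk_avoiding V E Z p" "hd p = x'" "last p = y" "w \<in> set p" by blast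
  have "walk_avoiding V E Z (x # p)" by (rule walk_avoiding_Cons[OF p(1,2) step(2,3,1)])
  then show ?case using p by (intro exI[of _ "x # p"]) (auto simp: walk_avoiding_def)
qed

lemma reach_avoiding_mono:
  assumes "reach_avoiding V' E' Z' x y" "V' \<subseteq> V" "E' \<subseteq> E" "Z \<inter> V' \<subseteq> Z'"
  shows "reach_avoiding V E Z x y"
  using assms(1) by induction (use assms(2-4) in \<open>auto intro: reach_avoiding.intros\<close>)

lemma walk_avoiding_closed:
  assumes "walk_avoiding V E Z p" "hd p \<in> B"
    and closed: "\<And>u v. (u, v) \<in> E \<Longrightarrow> u \<in> B \<Longrightarrow> u \<notin> Z \<Longrightarrow> v \<notin> Z \<Longrightarrow> v \<in> B"
  shows "set p \<subseteq> B"
proof -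
  have "p ! i \<in> B" if "i < length p" for i
    using that
  proof (induction i)
    case 0
    then show ?case using assms(2) by (simp add: hd_conv_nth)
  next
    case (Suc i)
    have walk: "set p \<subseteq> V - Z" "(p ! i, p ! Suc i) \<in> E"
      using assms(1) Suc.prems by (auto simp: walk_avoiding_def)
    moreover have "p ! i \<notin> Z" "p ! Suc i \<notin> Z"
      using walk(1) Suc.prems by (meson Diff_iff Suc_lessD nth_mem subsetD)+
    ultimately show ?case using Suc closed by (meson Suc_lessD)
  qed
  then show ?thesis by (auto simp: in_set_conv_nth)
qed

section \<open>Havens bound the directed tree-width from below\<close>

definition strongly_connected_avoiding :: "'a set \<Rightarrow> ('a \<times> 'a) set \<Rightarrow> 'a set \<Rightarrow> 'a set \<Rightarrow> bool" where
  "strongly_connected_avoiding V E Z S \<longleftrightarrow> S \<noteq> {} \<and> (\<forall>x\<in>S. \<forall>y\<in>S. reach_avoiding V E Z x y)"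

lemma strongly_connected_avoiding_subset:
  "strongly_connected_avoiding V E Z S \<Longrightarrow> S \<subseteq> V - Z"
  unfolding strongly_connected_avoiding_def by (fastforce dest: reach_avoiding_endpoints)

lemma strongly_connected_avoiding_within_normal:
  assumes C: "strongly_connected_avoiding V E Z C" and S: "z_normal V E Z S"
    and x: "x \<in> C" "x \<in> S"
  shows "C \<subseteq> S"
proof (rule subsetI, rule ccontr)
  fix y assume y: "y \<in> C" "y \<notin> S"
  have "reach_avoiding V E Z x y" "reach_avoiding V E Z y x"
    using C x(1) y(1) unfolding strongly_connected_avoiding_def by blast+
  then obtain p where p: "walk_avoiding V E Z p" "hd p = x" "last p = x" "y \<in> set p"
    using reach_avoiding_walk_through by metis
  have "y \<notin> Z" using strongly_connected_avoiding_subset[OF C] y(1) by blast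
  then have "walk_avoiding V E Z p \<and> hd p \<in> S \<and> last p \<in> S \<and> (\<exists>w\<in>set p. w \<notin> Z \<union> S)"
    using p x(2) y(2) by auto
  with S show False unfolding z_normal_def by blast
qed

text \<open>Weaker than the usual notion, where \<beta> Z is a strong component of G - Z: the lower
 bound only needs \<beta> Z to be strongly connected there, and this makes havens easy to build for
 directed unions and series compositions.\<close>

definition haven :: "'a set \<Rightarrow> ('a \<times> 'a) set \<Rightarrow> nat \<Rightarrow> ('a set \<Rightarrow> 'a set) \<Rightarrow> bool" where
  "haven V E k \<beta> \<longleftrightarrow>
     (\<forall>Z. Z \<subseteq> V \<longrightarrow> card Z < k \<longrightarrow> strongly_connected_avoiding V E Z (\<beta> Z)) \<and>
     (\<forall>Z Z'. Z \<subseteq> Z' \<longrightarrow> Z' \<subseteq> V \<longrightarrow> card Z' < k \<longrightarrow> \<beta> Z' \<subseteq> \<beta> Z)"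

lemma haven_strongly_connected:
  "haven V E k \<beta> \<Longrightarrow> Z \<subseteq> V \<Longrightarrow> card Z < k \<Longrightarrow> strongly_connected_avoiding V E Z (\<beta> Z)"
  by (simp add: haven_def)

lemma haven_antimono:
  "haven V E k \<beta> \<Longrightarrow> Z \<subseteq> Z' \<Longrightarrow> Z' \<subseteq> V \<Longrightarrow> card Z' < k \<Longrightarrow> \<beta> Z' \<subseteq> \<beta> Z"
  by (simp add: haven_def)

lemma haven_order_le_card:
  assumes "haven V E k \<beta>"
  shows "k \<le> card V"
proof (rule ccontr)
  assume "\<not> k \<le> card V"
  then have "strongly_connected_avoiding V E V (\<beta> V)"
    using haven_strongly_connected[OF assms order_refl] by simp
  then have "\<beta> V \<subseteq> V - V" "\<beta> V \<noteq> {}"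
    by (rule strongly_connected_avoiding_subset, simp add: strongly_connected_avoiding_def)
  then show False by simp
qed

definition dtd_bag :: "(nat \<times> nat) set \<Rightarrow> (nat \<times> nat \<Rightarrow> 'a set) \<Rightarrow> (nat \<Rightarrow> 'a set) \<Rightarrow> nat \<Rightarrow> 'a set" where
  "dtd_bag ET X W r = W r \<union> (\<Union>e\<in>{e\<in>ET. fst e = r \<or> snd e = r}. X e)"

definition dtd_below :: "nat set \<Rightarrow> (nat \<times> nat) set \<Rightarrow> (nat \<Rightarrow> 'a set) \<Rightarrow> nat \<Rightarrow> 'a set" where
  "dtd_below VT ET W v = (\<Union>r\<in>{r\<in>VT. (v, r) \<in> ET\<^sup>*}. W r)"

lemma dtd_width_eq: "dtd_width VT ET X W = Max ((\<lambda>r. card (dtd_bag ET X W r)) ` VT) - 1"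
  by (simp add: dtd_width_def dtd_bag_def)

lemma out_treeD:
  "out_tree VT ET r0 \<Longrightarrow> finite VT \<and> r0 \<in> VT \<and> ET \<subseteq> VT \<times> VT \<and> (\<forall>v\<in>VT. (r0, v) \<in> ET\<^sup>*)"
  unfolding out_tree_def by (elim conjE) simp

lemma is_dtdD:
  assumes "is_dtd V E VT ET r0 X W"
  shows "out_tree VT ET r0" "(\<Union>r\<in>VT. W r) = V" "\<And>r. r \<in> VT \<Longrightarrow> W r \<subseteq> V"
    "\<And>e. e \<in> ET \<Longrightarrow> X e \<subseteq> V"
    "\<And>u v. (u, v) \<in> ET \<Longrightarrow> z_normal V E (X (u, v)) (dtd_below VT ET W v)"
  using assms unfolding is_dtd_def dtd_below_def by (elim conjE; fast)+

lemma dtd_arcs: "is_dtd V E VT ET r0 X W \<Longrightarrow> ET \<subseteq> VT \<times> VT"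
  using is_dtdD(1) out_treeD by blast

lemma dtd_below_root:
  assumes "is_dtd V E VT ET r0 X W"
  shows "dtd_below VT ET W r0 = V"
proof -
  have "{r \<in> VT. (r0, r) \<in> ET\<^sup>*} = VT" using out_treeD[OF is_dtdD(1)[OF assms]] by blast
  then show ?thesis using is_dtdD(2)[OF assms] unfolding dtd_below_def by simp
qed

lemma dtd_bag_subset:
  assumes "is_dtd V E VT ET r0 X W" "r \<in> VT"
  shows "dtd_bag ET X W r \<subseteq> V"
  using is_dtdD(3,4)[OF assms(1)] assms(2) unfolding dtd_bag_def by blast

lemma dtd_bag_arc:
  assumes "(u, v) \<in> ET"
  shows "X (u, v) \<subseteq> dtd_bag ET X W u" "X (u, v) \<subseteq> dtd_bag ET X W v"
  using assms unfolding dtd_bag_def by force+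

lemma out_tree_acyclic:
  assumes "out_tree VT ET r0"
  shows "acyclic ET"
proof -
  have arcs: "ET \<subseteq> VT \<times> VT" and root: "\<And>u. (u, r0) \<notin> ET"
    and parent: "\<And>v. v \<in> VT - {r0} \<Longrightarrow> \<exists>!u. (u, v) \<in> ET"
    and reach: "\<And>v. v \<in> VT \<Longrightarrow> (r0, v) \<in> ET\<^sup>*"
    using assms unfolding out_tree_def by auto
  have no_cycle: "(x, x) \<notin> ET\<^sup>+" if "(r0, x) \<in> ET\<^sup>*" for x
    using that
  proof (induction rule: rtrancl_induct)
    case base
    show ?case using root by (auto elim: tranclE)
  next
    case (step y x)
    show ?case
    proof
      assume "(x, x) \<in> ET\<^sup>+"
      then obtain z where z: "(x, z) \<in> ET\<^sup>*" "(z, x) \<in> ET" using tranclD2 by metis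
      have "x \<in> VT - {r0}" using step(2) arcs root by blast
      then have "z = y" using parent z(2) step(2) by blast
      then have "(y, y) \<in> ET\<^sup>+" using z(1) step(2) by (meson rtrancl_into_trancl2)
      then show False using step(3) by blast
    qed
  qed
  show ?thesis
    unfolding acyclic_def
  proof
    fix x
    show "(x, x) \<notin> ET\<^sup>+"
    proof
      assume cycle: "(x, x) \<in> ET\<^sup>+"
      then have "x \<in> VT" using arcs by (auto elim: converse_tranclE)
      then show False using no_cycle reach cycle by blast
    qed
  qed
qed

text \<open>The robber's escape: if the haven at the bag of r lies below r, the arc to the
 subtree containing it is guarded by its label Z, and Z-normality of that subtree keeps
 the strongly connected set \<beta> Z inside it.\<close>

lemma haven_dtd_descend:
  assumes dtd: "is_dtd V E VT ET r0 X W" and hv: "haven V E k \<beta>" and "finite V"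
    and small: "\<forall>r\<in>VT. card (dtd_bag ET X W r) < k"
    and r: "r \<in> VT" and below: "\<beta> (dtd_bag ET X W r) \<subseteq> dtd_below VT ET W r"
  shows "\<exists>v. (r, v) \<in> ET \<and> \<beta> (dtd_bag ET X W v) \<subseteq> dtd_below VT ET W v"
proof -
  have bag_V: "dtd_bag ET X W s \<subseteq> V" if "s \<in> VT" for s using dtd_bag_subset[OF dtd that] .
  have bag_card: "card Y < k" if "Y \<subseteq> dtd_bag ET X W s" "s \<in> VT" for Y s
  proof -
    have "card Y \<le> card (dtd_bag ET X W s)"
      using card_mono[OF finite_subset[OF bag_V[OF that(2)] \<open>finite V\<close>] that(1)] .
    then show ?thesis using small that(2) by fastforce
  qed
  have haven_bag: "strongly_connected_avoiding V E Y (\<beta> Y)"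
    if "Y \<subseteq> dtd_bag ET X W s" "s \<in> VT" for Y s
    using order_trans[OF that(1) bag_V[OF that(2)]] bag_card[OF that]
    by (rule haven_strongly_connected[OF hv])
  obtain x where x: "x \<in> \<beta> (dtd_bag ET X W r)"
    using haven_bag[OF order_refl r] unfolding strongly_connected_avoiding_def by blast
  have "x \<notin> dtd_bag ET X W r"
    using x haven_bag[OF order_refl r] strongly_connected_avoiding_subset by blast
  then have "x \<notin> W r" unfolding dtd_bag_def by blast
  obtain r' where r': "(r, r') \<in> ET\<^sup>*" "r' \<in> VT" "x \<in> W r'"
    using x below unfolding dtd_below_def by blast
  with \<open>x \<notin> W r\<close> have "r \<noteq> r'" by blast
  with r'(1) obtain v where v: "(r, v) \<in> ET" "(v, r') \<in> ET\<^sup>*"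
    by (blast elim: converse_rtranclE)
  then have "v \<in> VT" using dtd_arcs[OF dtd] by auto
  define Z where "Z = X (r, v)"
  have Z_r: "Z \<subseteq> dtd_bag ET X W r" and Z_v: "Z \<subseteq> dtd_bag ET X W v"
    unfolding Z_def by (rule dtd_bag_arc[OF v(1)])+
  note Z_haven = haven_bag[OF Z_r r]
  have x_Z: "x \<in> \<beta> Z" using haven_antimono[OF hv Z_r bag_V[OF r] bag_card[OF order_refl r]] x ..
  have x_below: "x \<in> dtd_below VT ET W v" using v(2) r'(2,3) unfolding dtd_below_def by blast
  have "\<beta> Z \<subseteq> dtd_below VT ET W v"
    using strongly_connected_avoiding_within_normal[OF Z_haven] is_dtdD(5)[OF dtd v(1), folded Z_def]
      x_Z x_below by blast
  moreover have "\<beta> (dtd_bag ET X W v) \<subseteq> \<beta> Z"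
    using haven_antimono[OF hv Z_v bag_V[OF \<open>v \<in> VT\<close>] bag_card[OF order_refl \<open>v \<in> VT\<close>]] .
  ultimately have "\<beta> (dtd_bag ET X W v) \<subseteq> dtd_below VT ET W v" by (rule order_trans[rotated])
  with v(1) show ?thesis by blast
qed

lemma haven_dtd_bag_large:
  assumes dtd: "is_dtd V E VT ET r0 X W" and hv: "haven V E k \<beta>" and "finite V"
  shows "\<exists>r\<in>VT. k \<le> card (dtd_bag ET X W r)"
proof (rule ccontr)
  assume "\<not> ?thesis"
  then have small: "\<forall>r\<in>VT. card (dtd_bag ET X W r) < k" by auto
  note tree = is_dtdD(1)[OF dtd]
  then have "finite ET" using out_treeD finite_subset by (metis finite_SigmaI)
  then have "wf (ET\<inverse>)" using finite_acyclic_wf_converse out_tree_acyclic[OF tree] by blast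
  define P where "P r \<longleftrightarrow> r \<in> VT \<and> \<beta> (dtd_bag ET X W r) \<subseteq> dtd_below VT ET W r" for r
  have "\<not> P r" for r
    using \<open>wf (ET\<inverse>)\<close>
  proof (induction r rule: wf_induct_rule)
    case (less r)
    show ?case
    proof
      assume "P r"
      then obtain v where "(r, v) \<in> ET" "\<beta> (dtd_bag ET X W v) \<subseteq> dtd_below VT ET W v"
        using haven_dtd_descend[OF dtd hv \<open>finite V\<close> small] unfolding P_def by blast
      moreover have "v \<in> VT" using \<open>(r, v) \<in> ET\<close> dtd_arcs[OF dtd] by blast
      ultimately show False using less.IH unfolding P_def by blast
    qed
  qed
  moreover have "P r0"
  proof -
    have r0: "r0 \<in> VT" using out_treeD[OF tree] by blast
    have "strongly_connected_avoiding V E (dtd_bag ET X W r0) (\<beta> (dtd_bag ET X W r0))"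
      using haven_strongly_connected[OF hv dtd_bag_subset[OF dtd r0]] small r0 by blast
    then show ?thesis
      unfolding P_def dtd_below_root[OF dtd] using r0 strongly_connected_avoiding_subset by blast
  qed
  ultimately show False by blast
qed

section \<open>Directed tree-width is at most directed path-width\<close>

definition path_arcs :: "nat \<Rightarrow> (nat \<times> nat) set" where
  "path_arcs n = {(i, Suc i) | i. Suc i < n}"

lemma path_arcs_rtrancl: "(i, j) \<in> (path_arcs n)\<^sup>* \<longleftrightarrow> i = j \<or> i \<le> j \<and> j < n"
proof
  show "(i, j) \<in> (path_arcs n)\<^sup>* \<Longrightarrow> i = j \<or> i \<le> j \<and> j < n"
    by (induction rule: rtrancl_induct) (auto simp: path_arcs_def)
  show "i = j \<or> i \<le> j \<and> j < n \<Longrightarrow> (i, j) \<in> (path_arcs n)\<^sup>*"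
  proof (elim disjE conjE)
    assume "i \<le> j" "j < n"
    then show ?thesis
    proof (induction j rule: dec_induct)
      case (step m)
      then have "(m, Suc m) \<in> path_arcs n" by (simp add: path_arcs_def)
      with step show ?case by (meson Suc_lessD rtrancl_into_rtrancl)
    qed simp
  qed simp
qed

lemma out_tree_path:
  assumes "0 < n"
  shows "out_tree {0..<n} (path_arcs n) 0"
  unfolding out_tree_def path_arcs_rtrancl
proof (intro conjI ballI allI)
  show "\<exists>!u. (u, v) \<in> path_arcs n" if "v \<in> {0..<n} - {0}" for v
  proof (rule ex1I[of _ "v - 1"])
    show "(v - 1, v) \<in> path_arcs n" using that by (auto simp: path_arcs_def)
  qed (auto simp: path_arcs_def)
qed (use assms in \<open>auto simp: path_arcs_def\<close>)

lemma path_dtd: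
  assumes n: "0 < n" and \<nu>: "inj_on \<nu> {0..<n}" "\<nu> ` {0..<n} = V"
    and sep_V: "\<And>i. Suc i < n \<Longrightarrow> sep i \<subseteq> V"
    and closed: "\<And>i u v. Suc i < n \<Longrightarrow> (u, v) \<in> E \<Longrightarrow> u \<in> \<nu> ` {Suc i..<n} \<Longrightarrow> v \<notin> sep i \<Longrightarrow>
                   v \<in> \<nu> ` {Suc i..<n}"
  shows "is_dtd V E {0..<n} (path_arcs n) 0 (\<lambda>e. sep (fst e)) (\<lambda>i. {\<nu> i})"
  unfolding is_dtd_def
proof (intro conjI ballI)
  show "out_tree {0..<n} (path_arcs n) 0" using n by (rule out_tree_path)
  show "sep (fst e) \<subseteq> V" if "e \<in> path_arcs n" for e
    using that sep_V unfolding path_arcs_def by force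
  show "{\<nu> r} \<noteq> {}" "{\<nu> r} \<subseteq> V" if "r \<in> {0..<n}" for r
    using that \<nu>(2) by auto
  show "r \<noteq> s \<longrightarrow> {\<nu> r} \<inter> {\<nu> s} = {}" if "r \<in> {0..<n}" "s \<in> {0..<n}" for r s
    using that \<nu>(1) by (auto dest: inj_onD)
  show "(\<Union>r\<in>{0..<n}. {\<nu> r}) = V" using \<nu>(2) by blast
  show "case e of (u, v) \<Rightarrow>
      z_normal V E (sep (fst (u, v))) (\<Union>r\<in>{r \<in> {0..<n}. (v, r) \<in> (path_arcs n)\<^sup>*}. {\<nu> r})"
    if "e \<in> path_arcs n" for e
  proof -
    obtain i where i: "e = (i, Suc i)" "Suc i < n"
      using \<open>e \<in> path_arcs n\<close> by (auto simp: path_arcs_def)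
    have below: "(\<Union>r\<in>{r \<in> {0..<n}. (Suc i, r) \<in> (path_arcs n)\<^sup>*}. {\<nu> r}) = \<nu> ` {Suc i..<n}"
      unfolding path_arcs_rtrancl by auto
    have "z_normal V E (sep i) (\<nu> ` {Suc i..<n})"
      unfolding z_normal_def
    proof
      assume "\<exists>p. walk_avoiding V E (sep i) p \<and> hd p \<in> \<nu> ` {Suc i..<n} \<and> last p \<in> \<nu> ` {Suc i..<n} \<and>
          (\<exists>w\<in>set p. w \<notin> sep i \<union> \<nu> ` {Suc i..<n})"
      then obtain p where p: "walk_avoiding V E (sep i) p" "hd p \<in> \<nu> ` {Suc i..<n}"
          "\<exists>w\<in>set p. w \<notin> sep i \<union> \<nu> ` {Suc i..<n}" by blast
      have "set p \<subseteq> \<nu> ` {Suc i..<n}"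
        using walk_avoiding_closed[OF p(1,2)] closed[OF i(2)] by blast
      then show False using p(3) by blast
    qed
    then show ?thesis using i below by simp
  qed
qed

lemma path_dtd_bag_subset:
  assumes "\<nu> r \<in> B" and "\<And>i. Suc i < n \<Longrightarrow> i = r \<or> Suc i = r \<Longrightarrow> sep i \<subseteq> B"
  shows "dtd_bag (path_arcs n) (\<lambda>e. sep (fst e)) (\<lambda>i. {\<nu> i}) r \<subseteq> B"
proof -
  have "sep (fst e) \<subseteq> B" if e: "e \<in> path_arcs n" "fst e = r \<or> snd e = r" for e
  proof -
    obtain i where "e = (i, Suc i)" "Suc i < n" using e(1) unfolding path_arcs_def by blast
    then show ?thesis using assms(2)[of i] e(2) by simp
  qed
  then show ?thesis using assms(1) unfolding dtd_bag_def by blast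
qed

lemma is_dpdD:
  assumes "is_dpd V E Xs"
  shows "Xs \<noteq> []" "\<And>X. X \<in> set Xs \<Longrightarrow> X \<subseteq> V" "\<Union>(set Xs) = V"
    "\<And>u v. (u, v) \<in> E \<Longrightarrow> \<exists>i j. i \<le> j \<and> j < length Xs \<and> u \<in> Xs ! i \<and> v \<in> Xs ! j"
    "\<And>v i j k. i \<le> j \<Longrightarrow> j \<le> k \<Longrightarrow> k < length Xs \<Longrightarrow> v \<in> Xs ! i \<Longrightarrow> v \<in> Xs ! k \<Longrightarrow> v \<in> Xs ! j"
  using assms unfolding is_dpd_def by (elim conjE; fast)+

definition first_bag :: "'a set list \<Rightarrow> 'a \<Rightarrow> nat" where
  "first_bag Xs v = (LEAST i. i < length Xs \<and> v \<in> Xs ! i)"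

lemma first_bag_least:
  assumes "i < length Xs" "v \<in> Xs ! i"
  shows "first_bag Xs v < length Xs" "v \<in> Xs ! first_bag Xs v" "first_bag Xs v \<le> i"
  using LeastI[of "\<lambda>i. i < length Xs \<and> v \<in> Xs ! i", OF conjI[OF assms]]
    Least_le[of "\<lambda>i. i < length Xs \<and> v \<in> Xs ! i", OF conjI[OF assms]]
  unfolding first_bag_def by auto

text \<open>For vertices vs listed by increasing first bag, this separates vs ! 0, ..., vs ! i from
 the later vertices.\<close>

definition first_bag_sep :: "'a set list \<Rightarrow> 'a list \<Rightarrow> nat \<Rightarrow> 'a set" where
  "first_bag_sep Xs vs i = nth vs ` {0..i} \<inter> Xs ! first_bag Xs (vs ! Suc i)"

context
  fixes V :: "'a set" and E Xs vs
  assumes dpd: "is_dpd V E Xs" and vs: "distinct vs" "set vs = V"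
    and sorted: "sorted (map (first_bag Xs) vs)"
begin

lemma first_bag_nth:
  assumes "i < length vs"
  shows "first_bag Xs (vs ! i) < length Xs" "vs ! i \<in> Xs ! first_bag Xs (vs ! i)"
proof -
  have "vs ! i \<in> \<Union>(set Xs)" using assms vs(2) is_dpdD(3)[OF dpd] by auto
  then obtain j where "j < length Xs" "vs ! i \<in> Xs ! j" by (auto simp: in_set_conv_nth)
  from first_bag_least(1,2)[OF this]
  show "first_bag Xs (vs ! i) < length Xs" "vs ! i \<in> Xs ! first_bag Xs (vs ! i)" .
qed

lemma first_bag_nth_mono: "i \<le> j \<Longrightarrow> j < length vs \<Longrightarrow> first_bag Xs (vs ! i) \<le> first_bag Xs (vs ! j)"
  using sorted_nth_mono[OF sorted] by simp

lemma nth_mem_first_bag_between: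
  assumes "s \<le> i" "i \<le> t" "t < length vs" "vs ! s \<in> Xs ! first_bag Xs (vs ! t)"
  shows "vs ! s \<in> Xs ! first_bag Xs (vs ! i)"
  using is_dpdD(5)[OF dpd first_bag_nth_mono[of s i] first_bag_nth_mono[of i t]]
    first_bag_nth[of s] first_bag_nth[of t] assms by auto

lemma first_bag_sep_subset:
  assumes "Suc i < length vs"
  shows "first_bag_sep Xs vs i \<subseteq> Xs ! first_bag Xs (vs ! i)"
    "first_bag_sep Xs vs i \<subseteq> Xs ! first_bag Xs (vs ! Suc i)"
  using nth_mem_first_bag_between[of _ i "Suc i"] assms unfolding first_bag_sep_def by auto

lemma first_bag_sep_closed:
  assumes i: "Suc i < length vs" and uv: "(u, v) \<in> E" and u: "u \<in> nth vs ` {Suc i..<length vs}"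
    and v: "v \<notin> first_bag_sep Xs vs i"
  shows "v \<in> nth vs ` {Suc i..<length vs}"
proof (rule ccontr)
  assume not_later: "v \<notin> nth vs ` {Suc i..<length vs}"
  obtain t where t: "Suc i \<le> t" "t < length vs" "u = vs ! t" using u by auto
  obtain j k where jk: "j \<le> k" "k < length Xs" "u \<in> Xs ! j" "v \<in> Xs ! k"
    using is_dpdD(4)[OF dpd uv] by blast
  then have "v \<in> set vs" using is_dpdD(2)[OF dpd nth_mem] vs(2) by blast
  then obtain s where "s < length vs" "v = vs ! s" by (metis in_set_conv_nth)
  with not_later have s: "s \<le> i" "v = vs ! s" by (auto simp: not_less_eq_eq)
  have "first_bag Xs (vs ! Suc i) \<le> k"
    using first_bag_nth_mono[OF t(1,2)] first_bag_least(3)[OF _ jk(3)] jk(1,2) t(3) by fastforce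
  then have "v \<in> Xs ! first_bag Xs (vs ! Suc i)"
    using is_dpdD(5)[OF dpd _ _ jk(2)] first_bag_nth[of s] first_bag_nth_mono[of s "Suc i"]
      s i jk(4) by simp
  then show False using v s unfolding first_bag_sep_def by auto
qed

end

text \<open>By the interval property every bag of the path-shaped decomposition built from an
 enumeration by increasing first bag lies in the first bag of its vertex.\<close>

lemma dpd_to_dtd:
  assumes dpd: "is_dpd V E Xs" and "finite V" "V \<noteq> {}"
  shows "\<exists>VT ET r0 X W. is_dtd V E VT ET r0 X W \<and> (\<forall>r\<in>VT. \<exists>B\<in>set Xs. dtd_bag ET X W r \<subseteq> B)"
proof -
  obtain vs0 where "distinct vs0" "set vs0 = V" using finite_distinct_list[OF \<open>finite V\<close>] by blast
  define vs where "vs = sort_key (first_bag Xs) vs0"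
  have vs: "distinct vs" "set vs = V" "sorted (map (first_bag Xs) vs)"
    unfolding vs_def using \<open>distinct vs0\<close> \<open>set vs0 = V\<close> by simp_all
  define n where "n = length vs"
  define sep where "sep = first_bag_sep Xs vs"
  have n: "0 < n" using vs(2) \<open>V \<noteq> {}\<close> unfolding n_def by auto
  have \<nu>: "inj_on (nth vs) {0..<n}" "nth vs ` {0..<n} = V"
    using vs unfolding n_def by (auto simp: inj_on_nth set_conv_nth)
  note bag = first_bag_nth[OF dpd vs, folded n_def]
  note sep_bags = first_bag_sep_subset[OF dpd vs, folded n_def sep_def]
  have "sep i \<subseteq> V" if "Suc i < n" for i
    using sep_bags(1)[OF that] is_dpdD(2)[OF dpd nth_mem[OF bag(1)[of i]]] that by simp
  then have "is_dtd V E {0..<n} (path_arcs n) 0 (\<lambda>e. sep (fst e)) (\<lambda>i. {vs ! i})"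
    using first_bag_sep_closed[OF dpd vs, folded n_def sep_def] by (rule path_dtd[OF n \<nu>])
  moreover have "\<exists>B\<in>set Xs. dtd_bag (path_arcs n) (\<lambda>e. sep (fst e)) (\<lambda>i. {vs ! i}) r \<subseteq> B"
    if "r \<in> {0..<n}" for r
  proof
    show "Xs ! first_bag Xs (vs ! r) \<in> set Xs" using bag(1)[of r] that by simp
    show "dtd_bag (path_arcs n) (\<lambda>e. sep (fst e)) (\<lambda>i. {vs ! i}) r \<subseteq> Xs ! first_bag Xs (vs ! r)"
    proof (rule path_dtd_bag_subset)
      show "vs ! r \<in> Xs ! first_bag Xs (vs ! r)" using bag(2)[of r] that by simp
      show "sep i \<subseteq> Xs ! first_bag Xs (vs ! r)" if "Suc i < n" "i = r \<or> Suc i = r" for i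
        using sep_bags[OF that(1)] that(2) by blast
    qed
  qed
  ultimately show ?thesis by blast
qed

lemma dpd_single_bag: "E \<subseteq> V \<times> V \<Longrightarrow> is_dpd V E [V]"
  unfolding is_dpd_def by auto

lemma dpw_le_dpd_width: "is_dpd V E Xs \<Longrightarrow> dpw V E \<le> dpd_width Xs"
  unfolding dpw_def by (blast intro: Least_le)

lemma dpd_width_le:
  assumes "Xs \<noteq> []" "\<And>X. X \<in> set Xs \<Longrightarrow> card X \<le> Suc k"
  shows "dpd_width Xs \<le> k"
proof -
  have "Max (card ` set Xs) \<le> Suc k" using assms by (simp add: Max_le_iff)
  then show ?thesis unfolding dpd_width_def by linarith
qed

lemma dtw_le_dtd_width: "is_dtd V E VT ET r0 X W \<Longrightarrow> dtw V E \<le> dtd_width VT ET X W"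
  unfolding dtw_def by (blast intro: Least_le)

lemma dtw_attained:
  assumes "digraph V E" "V \<noteq> {}"
  obtains VT ET r0 X W where "is_dtd V E VT ET r0 X W" "dtd_width VT ET X W = dtw V E"
proof -
  have "finite V" "E \<subseteq> V \<times> V" using assms(1) unfolding digraph_def by simp_all
  then obtain VT ET r0 X W where "is_dtd V E VT ET r0 X W"
    using dpd_to_dtd[OF dpd_single_bag[OF \<open>E \<subseteq> V \<times> V\<close>] \<open>finite V\<close> assms(2)] by blast
  then have "\<exists>k VT ET r0 X W. is_dtd V E VT ET r0 X W \<and> dtd_width VT ET X W = k" by blast
  from LeastI_ex[OF this] show ?thesis using that unfolding dtw_def by blast
qed

lemma dtd_width_le_dpd_width:
  assumes dtd: "is_dtd V E VT ET r0 X W" and dpd: "is_dpd V E Xs" and "finite V"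
    and bags: "\<And>r. r \<in> VT \<Longrightarrow> \<exists>B\<in>set Xs. dtd_bag ET X W r \<subseteq> B"
  shows "dtd_width VT ET X W \<le> dpd_width Xs"
proof -
  have VT: "finite VT" "VT \<noteq> {}" using out_treeD[OF is_dtdD(1)[OF dtd]] by auto
  have "card (dtd_bag ET X W r) \<le> Max (card ` set Xs)" if r: "r \<in> VT" for r
  proof -
    obtain B where B: "B \<in> set Xs" "dtd_bag ET X W r \<subseteq> B" using bags[OF r] by blast
    have "finite B" using is_dpdD(2)[OF dpd B(1)] \<open>finite V\<close> by (rule finite_subset)
    then have "card (dtd_bag ET X W r) \<le> card B" using B(2) by (rule card_mono)
    also have "\<dots> \<le> Max (card ` set Xs)" using B(1) by simp
    finally show ?thesis .
  qed
  then show ?thesis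
    unfolding dtd_width_eq dpd_width_def using VT by (simp add: Max_le_iff diff_le_mono)
qed

lemma dtw_le_dpw:
  assumes "digraph V E" "V \<noteq> {}"
  shows "dtw V E \<le> dpw V E"
proof -
  have "finite V" "E \<subseteq> V \<times> V" using assms(1) unfolding digraph_def by simp_all
  then have "\<exists>k Xs. is_dpd V E Xs \<and> dpd_width Xs = k" using dpd_single_bag by blast
  from LeastI_ex[OF this] obtain Xs where Xs: "is_dpd V E Xs" "dpd_width Xs = dpw V E"
    unfolding dpw_def by blast
  obtain VT ET r0 X W where dtd: "is_dtd V E VT ET r0 X W"
    and bags: "\<And>r. r \<in> VT \<Longrightarrow> \<exists>B\<in>set Xs. dtd_bag ET X W r \<subseteq> B"
    using dpd_to_dtd[OF Xs(1) \<open>finite V\<close> assms(2)] by blast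
  have "dtw V E \<le> dtd_width VT ET X W" using dtd by (rule dtw_le_dtd_width)
  also have "\<dots> \<le> dpd_width Xs" using dtd Xs(1) \<open>finite V\<close> bags by (rule dtd_width_le_dpd_width)
  finally show ?thesis using Xs(2) by simp
qed

lemma haven_le_dtd_width:
  assumes "is_dtd V E VT ET r0 X W" "haven V E (Suc k) \<beta>" "finite V"
  shows "k \<le> dtd_width VT ET X W"
proof -
  obtain r where "r \<in> VT" "Suc k \<le> card (dtd_bag ET X W r)"
    using haven_dtd_bag_large[OF assms] by blast
  moreover have "finite VT" using out_treeD[OF is_dtdD(1)[OF assms(1)]] by blast
  ultimately have "Suc k \<le> Max ((\<lambda>r. card (dtd_bag ET X W r)) ` VT)"
    by (meson Max_ge finite_imageI image_eqI le_trans)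
  then show ?thesis unfolding dtd_width_eq by linarith
qed

lemma haven_le_dtw:
  assumes "digraph V E" "V \<noteq> {}" "haven V E (Suc k) \<beta>"
  shows "k \<le> dtw V E"
proof -
  obtain VT ET r0 X W where dtd: "is_dtd V E VT ET r0 X W" and "dtd_width VT ET X W = dtw V E"
    by (rule dtw_attained[OF assms(1,2)])
  moreover have "finite V" using assms(1) unfolding digraph_def by simp
  ultimately show ?thesis using haven_le_dtd_width[OF dtd assms(3)] by simp
qed

section \<open>Havens and path-decompositions along an ex-di-co-tree\<close>

lemma strongly_connected_avoiding_restrict:
  assumes "strongly_connected_avoiding V' E' (Z \<inter> V') S" "V' \<subseteq> V" "E' \<subseteq> E"
  shows "strongly_connected_avoiding V E Z S"
proof -
  have "reach_avoiding V E Z x y" if "reach_avoiding V' E' (Z \<inter> V') x y" for x y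
    by (rule reach_avoiding_mono[OF that assms(2,3)]) blast
  then show ?thesis using assms(1) unfolding strongly_connected_avoiding_def by blast
qed

lemma haven_restrict:
  assumes "haven V' E' k \<beta>" "V' \<subseteq> V" "E' \<subseteq> E" "Z \<subseteq> V" "card (Z \<inter> V') < k"
  shows "strongly_connected_avoiding V E Z (\<beta> (Z \<inter> V'))"
  using haven_strongly_connected[OF assms(1) _ assms(5)] assms(2,3)
  by (rule strongly_connected_avoiding_restrict) auto

lemma haven_leaf: "haven {v} {} 1 (\<lambda>Z. {v})"
proof -
  have "Z = {}" if "Z \<subseteq> {v}" "card Z < 1" for Z :: "'a set"
    using that by (metis card_0_eq finite_subset finite.intros less_one)
  then show ?thesis
    unfolding haven_def strongly_connected_avoiding_def by (auto intro: reach_avoiding.refl)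
qed

lemma haven_supergraph:
  assumes hv: "haven V' E' k \<beta>" and "V' \<subseteq> V" "E' \<subseteq> E" "finite V"
  shows "haven V E k (\<lambda>Z. \<beta> (Z \<inter> V'))"
proof -
  have small: "card (Z \<inter> V') < k" if "Z \<subseteq> V" "card Z < k" for Z
    using card_mono[OF finite_subset[OF that(1) \<open>finite V\<close>], of "Z \<inter> V'"] that(2) by simp
  show ?thesis
    unfolding haven_def
  proof (intro conjI allI impI)
    show "strongly_connected_avoiding V E Z (\<beta> (Z \<inter> V'))" if "Z \<subseteq> V" "card Z < k" for Z
      using haven_restrict[OF hv assms(2,3) that(1) small[OF that]] .
    show "\<beta> (Z' \<inter> V') \<subseteq> \<beta> (Z \<inter> V')" if "Z \<subseteq> Z'" "Z' \<subseteq> V" "card Z' < k" for Z Z'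
      by (rule haven_antimono[OF hv _ Int_lower2 small[OF that(2,3)]]) (use that(1) in blast)
  qed
qed

lemma card_eq_card_Int_plus:
  assumes "finite A" "finite B" "A \<inter> B = {}" "Z \<subseteq> A \<union> B" "B \<subseteq> Z"
  shows "card Z = card (Z \<inter> A) + card B"
proof -
  have "Z = (Z \<inter> A) \<union> B" using assms(4,5) by blast
  moreover have "card ((Z \<inter> A) \<union> B) = card (Z \<inter> A) + card B"
    by (rule card_Un_disjoint) (use assms(1-3) in auto)
  ultimately show ?thesis by simp
qed

lemma strongly_connected_avoiding_join:
  assumes E: "V1 \<times> V2 \<subseteq> E" "V2 \<times> V1 \<subseteq> E" and a: "a \<in> V1 - Z" and b: "b \<in> V2 - Z"
  shows "strongly_connected_avoiding (V1 \<union> V2) E Z (V1 \<union> V2 - Z)"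
  unfolding strongly_connected_avoiding_def
proof (intro conjI ballI)
  show "V1 \<union> V2 - Z \<noteq> {}" using a by blast
  fix x y assume xy: "x \<in> V1 \<union> V2 - Z" "y \<in> V1 \<union> V2 - Z"
  consider "x \<in> V1" "y \<in> V1" | "x \<in> V1" "y \<in> V2" | "x \<in> V2" "y \<in> V1" | "x \<in> V2" "y \<in> V2"
    using xy by blast
  then show "reach_avoiding (V1 \<union> V2) E Z x y"
  proof cases
    case 1
    then have "(x, b) \<in> E" "(b, y) \<in> E" using b E by blast+
    then show ?thesis using xy b by (blast intro: reach_avoiding.step reach_avoiding_arc)
  next
    case 4
    then have "(x, a) \<in> E" "(a, y) \<in> E" using a E by blast+
    then show ?thesis using xy a by (blast intro: reach_avoiding.step reach_avoiding_arc)
  qed (use xy E in \<open>auto intro: reach_avoiding_arc\<close>)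
qed

definition series_haven ::
    "'a set \<Rightarrow> 'a set \<Rightarrow> ('a set \<Rightarrow> 'a set) \<Rightarrow> ('a set \<Rightarrow> 'a set) \<Rightarrow> 'a set \<Rightarrow> 'a set" where
  "series_haven V1 V2 \<beta>1 \<beta>2 Z =
     (if V2 \<subseteq> Z then \<beta>1 (Z \<inter> V1) else if V1 \<subseteq> Z then \<beta>2 (Z \<inter> V2) else V1 \<union> V2 - Z)"

context
  fixes V1 V2 :: "'a set" and E1 E2 E k1 k2 \<beta>1 \<beta>2
  assumes h1: "haven V1 E1 k1 \<beta>1" and h2: "haven V2 E2 k2 \<beta>2"
    and disj: "V1 \<inter> V2 = {}" and fin: "finite V1" "finite V2"
    and E: "E1 \<subseteq> E" "E2 \<subseteq> E" "V1 \<times> V2 \<subseteq> E" "V2 \<times> V1 \<subseteq> E"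
begin

lemma series_order_cases:
  assumes Z: "Z \<subseteq> V1 \<union> V2" "card Z < min (k1 + card V2) (k2 + card V1)"
  shows "V2 \<subseteq> Z \<Longrightarrow> card (Z \<inter> V1) < k1" "V1 \<subseteq> Z \<Longrightarrow> card (Z \<inter> V2) < k2"
    "\<not> (V1 \<subseteq> Z \<and> V2 \<subseteq> Z)"
proof -
  show "card (Z \<inter> V1) < k1" if "V2 \<subseteq> Z"
    using card_eq_card_Int_plus[OF fin disj Z(1) that] Z(2) by linarith
  show "card (Z \<inter> V2) < k2" if "V1 \<subseteq> Z"
    using card_eq_card_Int_plus[OF fin(2,1) _ _ that] disj Z by (simp add: Int_commute Un_commute)
  show "\<not> (V1 \<subseteq> Z \<and> V2 \<subseteq> Z)"
  proof
    assume "V1 \<subseteq> Z \<and> V2 \<subseteq> Z"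
    then have "Z = V1 \<union> V2" using Z(1) by blast
    then have "card Z = card V1 + card V2" using card_Un_disjoint[OF fin disj] by simp
    then show False using Z(2) haven_order_le_card[OF h1] by linarith
  qed
qed

lemma series_haven_strongly_connected:
  assumes Z: "Z \<subseteq> V1 \<union> V2" "card Z < min (k1 + card V2) (k2 + card V1)"
  shows "strongly_connected_avoiding (V1 \<union> V2) E Z (series_haven V1 V2 \<beta>1 \<beta>2 Z)"
proof (cases "V2 \<subseteq> Z")
  case True
  then show ?thesis
    using haven_restrict[OF h1 _ E(1) Z(1) series_order_cases(1)[OF Z True]]
    unfolding series_haven_def by simp
next
  case False
  show ?thesis
  proof (cases "V1 \<subseteq> Z")
    case True
    then show ?thesis
      using haven_restrict[OF h2 _ E(2) Z(1) series_order_cases(2)[OF Z True]] False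
      unfolding series_haven_def by simp
  next
    case False
    then show ?thesis
      using \<open>\<not> V2 \<subseteq> Z\<close> strongly_connected_avoiding_join[OF E(3,4)]
      unfolding series_haven_def by auto
  qed
qed

lemma series_haven_antimono:
  assumes Z: "Z \<subseteq> Z'" "Z' \<subseteq> V1 \<union> V2" "card Z' < min (k1 + card V2) (k2 + card V1)"
  shows "series_haven V1 V2 \<beta>1 \<beta>2 Z' \<subseteq> series_haven V1 V2 \<beta>1 \<beta>2 Z"
proof (cases "V2 \<subseteq> Z")
  case True
  then have "V2 \<subseteq> Z'" using Z(1) by blast
  have "\<beta>1 (Z' \<inter> V1) \<subseteq> \<beta>1 (Z \<inter> V1)"
    by (rule haven_antimono[OF h1 _ Int_lower2 series_order_cases(1)[OF Z(2,3) \<open>V2 \<subseteq> Z'\<close>]])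
      (use Z(1) in blast)
  then show ?thesis using True \<open>V2 \<subseteq> Z'\<close> unfolding series_haven_def by simp
next
  case False
  show ?thesis
  proof (cases "V1 \<subseteq> Z")
    case True
    then have "V1 \<subseteq> Z'" "\<not> V2 \<subseteq> Z'" using Z(1) series_order_cases(3)[OF Z(2,3)] by blast+
    have "\<beta>2 (Z' \<inter> V2) \<subseteq> \<beta>2 (Z \<inter> V2)"
      by (rule haven_antimono[OF h2 _ Int_lower2 series_order_cases(2)[OF Z(2,3) \<open>V1 \<subseteq> Z'\<close>]])
        (use Z(1) in blast)
    then show ?thesis using True False \<open>V1 \<subseteq> Z'\<close> \<open>\<not> V2 \<subseteq> Z'\<close> unfolding series_haven_def by simp
  next
    case False
    have "series_haven V1 V2 \<beta>1 \<beta>2 Z' \<subseteq> V1 \<union> V2 - Z'"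
      using strongly_connected_avoiding_subset[OF series_haven_strongly_connected[OF Z(2,3)]] .
    moreover have "series_haven V1 V2 \<beta>1 \<beta>2 Z = V1 \<union> V2 - Z"
      using False \<open>\<not> V2 \<subseteq> Z\<close> unfolding series_haven_def by simp
    ultimately show ?thesis using Z(1) by blast
  qed
qed

lemma haven_series:
  "haven (V1 \<union> V2) E (min (k1 + card V2) (k2 + card V1)) (series_haven V1 V2 \<beta>1 \<beta>2)"
  unfolding haven_def using series_haven_strongly_connected series_haven_antimono by blast

end

lemma dpdI:
  assumes "Xs \<noteq> []" "\<Union>(set Xs) = V"
    "\<And>u v. (u, v) \<in> E \<Longrightarrow> \<exists>i j. i \<le> j \<and> j < length Xs \<and> u \<in> Xs ! i \<and> v \<in> Xs ! j"
    "\<And>v i j k. i \<le> j \<Longrightarrow> j \<le> k \<Longrightarrow> k < length Xs \<Longrightarrow> v \<in> Xs ! i \<Longrightarrow> v \<in> Xs ! k \<Longrightarrow> v \<in> Xs ! j"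
  shows "is_dpd V E Xs"
  using assms unfolding is_dpd_def by (intro conjI; fast)

lemma ordered_in_append:
  assumes "(\<exists>i j. i \<le> j \<and> j < length Xs \<and> u \<in> Xs ! i \<and> v \<in> Xs ! j) \<or>
      (\<exists>i j. i \<le> j \<and> j < length Ys \<and> u \<in> Ys ! i \<and> v \<in> Ys ! j) \<or>
      u \<in> \<Union>(set Xs) \<and> v \<in> \<Union>(set Ys)"
  shows "\<exists>i j. i \<le> j \<and> j < length (Xs @ Ys) \<and> u \<in> (Xs @ Ys) ! i \<and> v \<in> (Xs @ Ys) ! j"
  using assms
proof (elim disjE exE conjE)
  fix i j assume "i \<le> j" "j < length Ys" "u \<in> Ys ! i" "v \<in> Ys ! j"
  then show ?thesis
    by (intro exI[of _ "length Xs + i"] exI[of _ "length Xs + j"]) (simp add: nth_append)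
next
  assume "u \<in> \<Union>(set Xs)" "v \<in> \<Union>(set Ys)"
  then obtain i j where "i < length Xs" "u \<in> Xs ! i" "j < length Ys" "v \<in> Ys ! j"
    by (auto simp: in_set_conv_nth)
  then show ?thesis by (intro exI[of _ i] exI[of _ "length Xs + j"]) (simp add: nth_append)
qed (auto simp: nth_append intro!: exI)

lemma interval_append:
  assumes d1: "is_dpd V1 E1 Xs" and d2: "is_dpd V2 E2 Ys" and disj: "V1 \<inter> V2 = {}"
    and ijk: "i \<le> j" "j \<le> k" "k < length (Xs @ Ys)" "v \<in> (Xs @ Ys) ! i" "v \<in> (Xs @ Ys) ! k"
  shows "v \<in> (Xs @ Ys) ! j"
proof -
  consider "k < length Xs" | "length Xs \<le> i" | "i < length Xs" "length Xs \<le> k" by linarith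
  then show ?thesis
  proof cases
    case 1
    then show ?thesis using ijk is_dpdD(5)[OF d1, of i j k v] by (simp add: nth_append)
  next
    case 2
    then show ?thesis
      using ijk is_dpdD(5)[OF d2, of "i - length Xs" "j - length Xs" "k - length Xs" v]
      by (simp add: nth_append)
  next
    case 3
    then have "v \<in> \<Union>(set Xs)" "v \<in> \<Union>(set Ys)" using ijk by (auto simp: nth_append)
    then show ?thesis using disj is_dpdD(3)[OF d1] is_dpdD(3)[OF d2] by blast
  qed
qed

lemma dpd_append:
  assumes d1: "is_dpd V1 E1 Xs1" and d2: "is_dpd V2 E2 Xs2" and disj: "V1 \<inter> V2 = {}"
    and E: "E \<subseteq> E1 \<union> E2 \<union> V1 \<times> V2"
  shows "is_dpd (V1 \<union> V2) E (Xs1 @ Xs2)"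
proof (rule dpdI)
  note a1 = is_dpdD[OF d1] and a2 = is_dpdD[OF d2]
  show "Xs1 @ Xs2 \<noteq> []" using a1(1) by simp
  show "\<Union>(set (Xs1 @ Xs2)) = V1 \<union> V2" using a1(3) a2(3) by simp
  show "\<exists>i j. i \<le> j \<and> j < length (Xs1 @ Xs2) \<and> u \<in> (Xs1 @ Xs2) ! i \<and> v \<in> (Xs1 @ Xs2) ! j"
    if "(u, v) \<in> E" for u v
    using that E a1(3,4) a2(3,4) by (intro ordered_in_append) blast
  show "v \<in> (Xs1 @ Xs2) ! j"
    if "i \<le> j" "j \<le> k" "k < length (Xs1 @ Xs2)" "v \<in> (Xs1 @ Xs2) ! i" "v \<in> (Xs1 @ Xs2) ! k"
    for v i j k
    using d1 d2 disj that by (rule interval_append)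
qed

lemma dpd_join:
  assumes d1: "is_dpd V1 E1 Xs" and E: "E \<subseteq> (V1 \<union> V2) \<times> (V1 \<union> V2)" "E \<inter> V1 \<times> V1 \<subseteq> E1"
  shows "is_dpd (V1 \<union> V2) E (map (\<lambda>X. X \<union> V2) Xs)"
proof (rule dpdI)
  note a1 = is_dpdD[OF d1]
  show "map (\<lambda>X. X \<union> V2) Xs \<noteq> []" using a1(1) by simp
  show "\<Union>(set (map (\<lambda>X. X \<union> V2) Xs)) = V1 \<union> V2" using a1(1,3) by auto
  show "\<exists>i j. i \<le> j \<and> j < length (map (\<lambda>X. X \<union> V2) Xs) \<and>
      u \<in> map (\<lambda>X. X \<union> V2) Xs ! i \<and> v \<in> map (\<lambda>X. X \<union> V2) Xs ! j"
    if uv: "(u, v) \<in> E" for u v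
  proof (cases "u \<in> V1 \<and> v \<in> V1")
    case True
    then obtain i j where "i \<le> j" "j < length Xs" "u \<in> Xs ! i" "v \<in> Xs ! j"
      using a1(4) E(2) uv by blast
    then show ?thesis by (intro exI[of _ i] exI[of _ j]) auto
  next
    case False
    text \<open>One end lies in V2 and hence in every bag; a bag containing the other end will do.\<close>
    have "\<exists>i<length Xs. (u \<in> V1 \<longrightarrow> u \<in> Xs ! i) \<and> (v \<in> V1 \<longrightarrow> v \<in> Xs ! i)"
      using False a1(1,3) by (cases "u \<in> V1"; cases "v \<in> V1") (auto simp: in_set_conv_nth)
    then obtain i where "i < length Xs" "u \<in> V1 \<longrightarrow> u \<in> Xs ! i" "v \<in> V1 \<longrightarrow> v \<in> Xs ! i" by blast
    moreover have "u \<in> V1 \<union> V2" "v \<in> V1 \<union> V2" using uv E(1) by blast+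
    ultimately show ?thesis by (intro exI[of _ i] exI[of _ i]) auto
  qed
  show "v \<in> map (\<lambda>X. X \<union> V2) Xs ! j"
    if "i \<le> j" "j \<le> k" "k < length (map (\<lambda>X. X \<union> V2) Xs)" "v \<in> map (\<lambda>X. X \<union> V2) Xs ! i"
      "v \<in> map (\<lambda>X. X \<union> V2) Xs ! k" for v i j k
    using that a1(5)[of i j k v] by auto
qed

lemma dico_eval_DUnion [simp]:
  "dico_eval (DUnion t1 t2) =
    (max (fst (dico_eval t1)) (fst (dico_eval t2)), snd (dico_eval t1) + snd (dico_eval t2))"
  by (simp add: case_prod_beta)

lemma dico_eval_Series [simp]:
  "dico_eval (Series t1 t2) =
    (min (fst (dico_eval t1) + snd (dico_eval t2)) (fst (dico_eval t2) + snd (dico_eval t1)),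
     snd (dico_eval t1) + snd (dico_eval t2))"
  by (simp add: case_prod_beta)

declare dico_eval.simps(2,3) [simp del]

lemma is_exdico_tree_digraph: "is_exdico_tree t V E \<Longrightarrow> digraph V E"
  by (induction rule: is_exdico_tree.induct) (auto simp: digraph_def)

lemma is_exdico_tree_nonempty: "is_exdico_tree t V E \<Longrightarrow> V \<noteq> {}"
  by (induction rule: is_exdico_tree.induct) auto

lemma dico_eval_snd: "is_exdico_tree t V E \<Longrightarrow> snd (dico_eval t) = card V"
  by (induction rule: is_exdico_tree.induct)
    (auto simp: card_Un_disjoint dest!: is_exdico_tree_digraph simp: digraph_def)

lemma dico_cost_eq: "is_exdico_tree t V E \<Longrightarrow> Suc (dico_cost t) = 2 * card V"
  by (induction rule: is_exdico_tree.induct)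
    (auto simp: card_Un_disjoint dest!: is_exdico_tree_digraph simp: digraph_def)

lemma exdico_tree_haven:
  "is_exdico_tree t V E \<Longrightarrow> \<exists>\<beta>. haven V E (Suc (fst (dico_eval t))) \<beta>"
proof (induction rule: is_exdico_tree.induct)
  case (leaf v)
  then show ?case using haven_leaf by fastforce
next
  case (dunion t1 V1 E1 t2 V2 E2 E)
  obtain \<beta>1 \<beta>2 where h1: "haven V1 E1 (Suc (fst (dico_eval t1))) \<beta>1"
    and h2: "haven V2 E2 (Suc (fst (dico_eval t2))) \<beta>2" using dunion.IH by blast
  have fin: "finite (V1 \<union> V2)"
    using dunion.hyps(1,2)[THEN is_exdico_tree_digraph] unfolding digraph_def by blast
  show ?case
    using haven_supergraph[OF h1 _ _ fin] haven_supergraph[OF h2 _ _ fin] dunion.hyps(4)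
    by (cases "fst (dico_eval t2) \<le> fst (dico_eval t1)") (auto simp: max_def)
next
  case (series t1 V1 E1 t2 V2 E2)
  obtain \<beta>1 \<beta>2 where h1: "haven V1 E1 (Suc (fst (dico_eval t1))) \<beta>1"
    and h2: "haven V2 E2 (Suc (fst (dico_eval t2))) \<beta>2" using series.IH by blast
  have "finite V1" "finite V2"
    using series.hyps(1,2)[THEN is_exdico_tree_digraph] unfolding digraph_def by blast+
  from haven_series[OF h1 h2 series.hyps(3) this, of "E1 \<union> E2 \<union> V1 \<times> V2 \<union> V2 \<times> V1"] show ?case
    using dico_eval_snd[OF series.hyps(1)] dico_eval_snd[OF series.hyps(2)] by auto
qed

lemma dpd_join_card:
  assumes "is_dpd V1 E1 Xs" "\<And>X. X \<in> set Xs \<Longrightarrow> card X \<le> k"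
    and "E \<subseteq> (V1 \<union> V2) \<times> (V1 \<union> V2)" "E \<inter> V1 \<times> V1 \<subseteq> E1"
  shows "\<exists>Ys. is_dpd (V1 \<union> V2) E Ys \<and> (\<forall>Y\<in>set Ys. card Y \<le> k + card V2)"
proof (intro exI conjI ballI)
  show "is_dpd (V1 \<union> V2) E (map (\<lambda>X. X \<union> V2) Xs)" by (rule dpd_join[OF assms(1,3,4)])
  fix Y assume "Y \<in> set (map (\<lambda>X. X \<union> V2) Xs)"
  then obtain X where "X \<in> set Xs" "Y = X \<union> V2" by auto
  then show "card Y \<le> k + card V2" using card_Un_le[of X V2] assms(2)[of X] by simp
qed

lemma dpd_series:
  assumes d1: "is_dpd V1 E1 Xs1" "\<forall>X\<in>set Xs1. card X \<le> k1"
    and d2: "is_dpd V2 E2 Xs2" "\<forall>X\<in>set Xs2. card X \<le> k2"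
    and disj: "V1 \<inter> V2 = {}" and arcs: "E1 \<subseteq> V1 \<times> V1" "E2 \<subseteq> V2 \<times> V2"
  defines "E \<equiv> E1 \<union> E2 \<union> V1 \<times> V2 \<union> V2 \<times> V1"
  shows "\<exists>Ys. is_dpd (V1 \<union> V2) E Ys \<and> (\<forall>Y\<in>set Ys. card Y \<le> min (k1 + card V2) (k2 + card V1))"
proof -
  have E: "E \<subseteq> (V1 \<union> V2) \<times> (V1 \<union> V2)" "E \<inter> V1 \<times> V1 \<subseteq> E1"
      "E \<subseteq> (V2 \<union> V1) \<times> (V2 \<union> V1)" "E \<inter> V2 \<times> V2 \<subseteq> E2"
    using disj arcs unfolding E_def by blast+
  obtain Ys1 where Ys1: "is_dpd (V1 \<union> V2) E Ys1" "\<forall>Y\<in>set Ys1. card Y \<le> k1 + card V2"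
    using dpd_join_card[OF d1(1) bspec[OF d1(2)] E(1,2)] by blast
  obtain Ys2 where Ys2: "is_dpd (V2 \<union> V1) E Ys2" "\<forall>Y\<in>set Ys2. card Y \<le> k2 + card V1"
    using dpd_join_card[OF d2(1) bspec[OF d2(2)] E(3,4)] by blast
  show ?thesis
  proof (cases "k1 + card V2 \<le> k2 + card V1")
    case True
    then show ?thesis using Ys1 by (auto simp: min_def)
  next
    case False
    then show ?thesis using Ys2 by (auto simp: min_def Un_commute)
  qed
qed

lemma exdico_tree_dpd:
  "is_exdico_tree t V E \<Longrightarrow> \<exists>Xs. is_dpd V E Xs \<and> (\<forall>X\<in>set Xs. card X \<le> Suc (fst (dico_eval t)))"
proof (induction rule: is_exdico_tree.induct)
  case (leaf v)
  show ?case by (intro exI[of _ "[{v}]"]) (simp add: dpd_single_bag)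
next
  case (dunion t1 V1 E1 t2 V2 E2 E)
  then obtain Xs1 Xs2 where Xs1: "is_dpd V1 E1 Xs1" "\<forall>X\<in>set Xs1. card X \<le> Suc (fst (dico_eval t1))"
    and Xs2: "is_dpd V2 E2 Xs2" "\<forall>X\<in>set Xs2. card X \<le> Suc (fst (dico_eval t2))" by blast
  show ?case
  proof (intro exI conjI)
    show "is_dpd (V1 \<union> V2) E (Xs1 @ Xs2)" using Xs1(1) Xs2(1) dunion.hyps(3,5) by (rule dpd_append)
    show "\<forall>X\<in>set (Xs1 @ Xs2). card X \<le> Suc (fst (dico_eval (DUnion t1 t2)))"
      using Xs1(2) Xs2(2) by fastforce
  qed
next
  case (series t1 V1 E1 t2 V2 E2)
  obtain Xs1 Xs2 where Xs1: "is_dpd V1 E1 Xs1" "\<forall>X\<in>set Xs1. card X \<le> Suc (fst (dico_eval t1))"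
    and Xs2: "is_dpd V2 E2 Xs2" "\<forall>X\<in>set Xs2. card X \<le> Suc (fst (dico_eval t2))"
    using series.IH by blast
  have "E1 \<subseteq> V1 \<times> V1" "E2 \<subseteq> V2 \<times> V2"
    using series.hyps(1,2)[THEN is_exdico_tree_digraph] unfolding digraph_def by simp_all
  from dpd_series[OF Xs1 Xs2 series.hyps(3) this] show ?case
    using dico_eval_snd[OF series.hyps(1)] dico_eval_snd[OF series.hyps(2)] by simp
qed

lemma exdico_tree_widths:
  assumes "is_exdico_tree t V E"
  shows "dpw V E = fst (dico_eval t) \<and> dtw V E = fst (dico_eval t)"
proof -
  have G: "digraph V E" "V \<noteq> {}"
    using assms by (rule is_exdico_tree_digraph, rule is_exdico_tree_nonempty)
  obtain \<beta> where "haven V E (Suc (fst (dico_eval t))) \<beta>" using exdico_tree_haven[OF assms] by blast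
  then have lower: "fst (dico_eval t) \<le> dtw V E" by (rule haven_le_dtw[OF G])
  obtain Xs where Xs: "is_dpd V E Xs" "\<forall>X\<in>set Xs. card X \<le> Suc (fst (dico_eval t))"
    using exdico_tree_dpd[OF assms] by blast
  have "dpd_width Xs \<le> fst (dico_eval t)"
    by (rule dpd_width_le[OF is_dpdD(1)[OF Xs(1)]]) (use Xs(2) in blast)
  with lower dtw_le_dpw[OF G] dpw_le_dpd_width[OF Xs(1)] show ?thesis by linarith
qed

theorem theorem5p7:
  "\<exists>c::nat. \<forall>(t :: 'a exdico_tree) V E. is_exdico_tree t V E \<longrightarrow>
      fst (dico_eval t) = dpw V E \<and> fst (dico_eval t) = dtw V E \<and>
      dico_cost t \<le> c * card V"
proof (intro exI[of _ 2] allI impI)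
  fix t :: "'a exdico_tree" and V E
  assume tree: "is_exdico_tree t V E"
  show "fst (dico_eval t) = dpw V E \<and> fst (dico_eval t) = dtw V E \<and> dico_cost t \<le> 2 * card V"
    using exdico_tree_widths[OF tree] dico_cost_eq[OF tree] by simp
qed

end
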